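(* Let $q$ be an indecomposable pattern. Then $\lim_{n\to\infty}\sqrt[n]{\textup{Sav}_n(q)}$ exists (and is finite).
   Context: Permutations are written in one-line notation $p=p_1\cdots p_n$ with $p_i=p(i)$. $p$ contains a pattern $q=q_1\cdots q_k$ if there are indices $i_1<\cdots<i_k$ with $p_{i_r}<p_{i_s}$ iff $q_r<q_s$; otherwise $p$ avoids $q$. $p^2(i)=p(p(i))$. A permutation $p$ is strongly $q$-avoiding if both $p$ and $p^2$ avoid $q$, and $\textup{Sav}_n(q)$ is the number of strongly $q$-avoiding permutations of length $n$. The direct sum of permutations $p$ (length $n$) and $p'$ (length $m$) is the permutation $p\oplus p'$ of length $n+m$ equal to $p_1\cdots p_n(p'_1+n)\cdots(p'_m+n)$. A pattern $q$ is indecomposable if it cannot be written as $q=a\oplus b$ with $a,b$ both nonempty, i.e. there is no cut of $q$ into a nonempty prefix and nonempty suffix with every entry of the prefix smaller than every entry of the suffix. *)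

theory Defs
  imports Complex_Main
begin

text \<open>Permutations in one-line notation as lists: p = [p_1, ..., p_n], list index i-1 holds p_i,
  values in {1..n}.\<close>

definition is_perm :: "nat \<Rightarrow> nat list \<Rightarrow> bool" where
  "is_perm n p \<longleftrightarrow> length p = n \<and> distinct p \<and> set p = {1..n}"

definition pval :: "nat list \<Rightarrow> nat \<Rightarrow> nat" where
  "pval p i = p ! (i - 1)"

definition perm_sq :: "nat list \<Rightarrow> nat list" where
  "perm_sq p = map (\<lambda>i. pval p (pval p i)) [1..<length p + 1]"

definition contains :: "nat list \<Rightarrow> nat list \<Rightarrow> bool" where
  "contains p q \<longleftrightarrow> (\<exists>ix :: nat \<Rightarrow> nat.
      (\<forall>r s. r < s \<and> s < length q \<longrightarrow> ix r < ix s) \<and>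
      (\<forall>r < length q. ix r < length p) \<and>
      (\<forall>r < length q. \<forall>s < length q. (p ! ix r < p ! ix s \<longleftrightarrow> q ! r < q ! s)))"

definition avoids :: "nat list \<Rightarrow> nat list \<Rightarrow> bool" where
  "avoids p q \<longleftrightarrow> \<not> contains p q"

definition strongly_avoids :: "nat list \<Rightarrow> nat list \<Rightarrow> bool" where
  "strongly_avoids p q \<longleftrightarrow> avoids p q \<and> avoids (perm_sq p) q"

definition Sav :: "nat \<Rightarrow> nat list \<Rightarrow> nat" where
  "Sav n q = card {p. is_perm n p \<and> strongly_avoids p q}"

definition indecomposable :: "nat list \<Rightarrow> bool" where
  "indecomposable q \<longleftrightarrow>
     \<not> (\<exists>j. 0 < j \<and> j < length q \<and>
            (\<forall>a < j. \<forall>b. j \<le> b \<and> b < length q \<longrightarrow> q ! a < q ! b))"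

end

theory Submission
  imports Defs "HOL-Library.FuncSet"
begin

text \<open>
  If p and p' are strongly q-avoiding, so is their direct sum: (p \<oplus> p')^2 = p^2 \<oplus> p'^2, and an
  occurrence of an indecomposable pattern in a direct sum lies entirely in one summand. Hence
  Sav(m) Sav(n) \<le> Sav(m + n); moreover Sav(n) \<ge> 1 because the identity is strongly q-avoiding.
  By Fekete's lemma applied to ln Sav(n), the n-th roots converge as soon as Sav(n) grows at most
  exponentially. That bound comes from the Marcus-Tardos theorem: an n \<times> n 0-1 matrix avoiding a
  fixed permutation matrix of size k has O(n) ones, shown by contracting K \<times> K blocks with
  K = k^2. Encoding an avoiding matrix of size K n by its contraction together with the contents
  of the O(n) nonempty blocks then bounds the number of avoiding matrices, and hence Sav(n),
  by Z^n (Klazar).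
\<close>

section \<open>Fekete's lemma\<close>

lemma superadditive_div_mult_le:
  fixes a :: "nat \<Rightarrow> real"
  assumes superadd: "\<And>m n. a m + a n \<le> a (m + n)" and nonneg: "\<And>n. 0 \<le> a n"
  shows "real (n div m) * a m \<le> a n"
proof -
  have multiple: "real l * a m \<le> a (l * m)" for l
  proof (induction l)
    case (Suc l)
    have "real (Suc l) * a m = real l * a m + a m"
      by (simp add: algebra_simps)
    also have "\<dots> \<le> a (l * m + m)"
      using Suc.IH superadd[of "l * m" m] by simp
    finally show ?case
      by (simp add: add.commute)
  qed (simp add: nonneg)
  have "real (n div m) * a m \<le> a (n div m * m) + a (n mod m)"
    using multiple[of "n div m"] nonneg[of "n mod m"] by simp
  also have "\<dots> \<le> a n"
    using superadd[of "n div m * m" "n mod m"] by simp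
  finally show ?thesis .
qed

lemma superadditive_lower_bound:
  fixes a :: "nat \<Rightarrow> real"
  assumes "\<And>m n. a m + a n \<le> a (m + n)" "\<And>n. 0 \<le> a n" "0 < m"
  shows "(real n - real m) * (a m / real m) \<le> a n"
proof -
  have "real n - real m \<le> real (n div m) * real m"
  proof -
    have "real n = real (n div m) * real m + real (n mod m)"
      by (metis div_mult_mod_eq of_nat_add of_nat_mult)
    moreover have "n mod m < m"
      using \<open>0 < m\<close> by simp
    ultimately show ?thesis
      by linarith
  qed
  then have "(real n - real m) * (a m / real m) \<le> real (n div m) * real m * (a m / real m)"
    using assms(2)[of m] by (intro mult_right_mono) auto
  also have "\<dots> = real (n div m) * a m"
    using \<open>0 < m\<close> by simp
  also have "\<dots> \<le> a n"
    by (rule superadditive_div_mult_le[where a = a, OF assms(1,2)])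
  finally show ?thesis .
qed

lemma convergent_superadditive_div:
  fixes a :: "nat \<Rightarrow> real"
  assumes superadd: "\<And>m n. a m + a n \<le> a (m + n)" and nonneg: "\<And>n. 0 \<le> a n"
    and bounded: "\<And>n. 0 < n \<Longrightarrow> a n / real n \<le> B"
  shows "convergent (\<lambda>n. a n / real n)"
proof -
  define s where "s = (SUP n\<in>{0<..}. a n / real n)"
  have bdd: "bdd_above ((\<lambda>n. a n / real n) ` {0<..})"
    using bounded by (intro bdd_aboveI2) auto
  have "(\<lambda>n. a n / real n) \<longlonglongrightarrow> s"
  proof (rule LIMSEQ_I)
    fix r :: real assume "0 < r"
    then obtain m where m: "0 < m" "s - r / 2 < a m / real m"
      using less_cSUP_iff[OF _ bdd, of "s - r / 2"] by (auto simp: s_def)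
    define t where "t = a m / real m"
    obtain N :: nat where N: "2 * real m * t / r < real N"
      using reals_Archimedean2 by blast
    have "norm (a n / real n - s) < r" if "N + 1 \<le> n" for n
    proof -
      have "0 < n"
        using that by simp
      have "2 * real m * t / r < real n"
        using N that by linarith
      then have "real m * t < real n * (r / 2)"
        using \<open>0 < r\<close> by (simp add: field_simps)
      moreover have "real n * (s - r / 2) < real n * t"
        using m(2) \<open>0 < n\<close> by (simp add: t_def[symmetric])
      ultimately have "real n * (s - r) < (real n - real m) * t"
        by (simp add: algebra_simps)
      also have "\<dots> \<le> a n"
        unfolding t_def by (rule superadditive_lower_bound[where a = a, OF superadd nonneg \<open>0 < m\<close>])
      finally have "real n * (s - r) < a n" .
      moreover have "a n / real n \<le> s"
        unfolding s_def using bdd \<open>0 < n\<close> by (auto intro: cSUP_upper)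
      ultimately show ?thesis
        using \<open>0 < n\<close> \<open>0 < r\<close> by (simp add: field_simps abs_if)
    qed
    then show "\<exists>N. \<forall>n\<ge>N. norm (a n / real n - s) < r"
      by blast
  qed
  then show ?thesis
    by (rule convergentI)
qed

lemma convergent_root_supermultiplicative:
  fixes f :: "nat \<Rightarrow> nat"
  assumes pos: "\<And>n. 0 < f n" and supermult: "\<And>m n. f m * f n \<le> f (m + n)"
    and exp_bound: "\<And>n. f n \<le> Z ^ n"
  shows "convergent (\<lambda>n. root n (real (f n)))"
proof -
  define a where "a n = ln (real (f n))" for n
  have "0 < Z"
    using pos[of 1] exp_bound[of 1] by simp
  have "a m + a n \<le> a (m + n)" for m n
  proof -
    have "a m + a n = ln (real (f m * f n))"
      unfolding a_def using pos[of m] pos[of n] by (simp add: ln_mult)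
    also have "\<dots> \<le> a (m + n)"
      unfolding a_def using supermult[of m n] pos[of m] pos[of n] pos[of "m + n"]
      by (subst ln_le_cancel_iff) (auto simp del: of_nat_mult)
    finally show ?thesis .
  qed
  moreover have "0 \<le> a n" for n
    using pos[of n] by (simp add: a_def)
  moreover have "a n / real n \<le> ln (real Z)" if "0 < n" for n
  proof -
    have "real (f n) \<le> real Z ^ n"
      using exp_bound[of n] by (metis of_nat_le_iff of_nat_power)
    then have "a n \<le> ln (real Z ^ n)"
      unfolding a_def using pos[of n] \<open>0 < Z\<close> by (subst ln_le_cancel_iff) auto
    then show ?thesis
      using that \<open>0 < Z\<close> by (simp add: ln_realpow field_simps)
  qed
  ultimately have "convergent (\<lambda>n. a n / real n)"
    by (rule convergent_superadditive_div)
  then obtain L where "(\<lambda>n. a n / real n) \<longlonglongrightarrow> L"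
    by (auto simp: convergent_def)
  then have "(\<lambda>n. exp (a n / real n)) \<longlonglongrightarrow> exp L"
    by (rule tendsto_exp)
  moreover have "\<forall>\<^sub>F n in sequentially. exp (a n / real n) = root n (real (f n))"
    using eventually_gt_at_top[of 0]
    by eventually_elim (use pos in \<open>simp add: a_def root_powr_inverse powr_def\<close>)
  ultimately have "(\<lambda>n. root n (real (f n))) \<longlonglongrightarrow> exp L"
    by (rule Lim_transform_eventually)
  then show ?thesis
    by (rule convergentI)
qed

section \<open>Linear bound for pattern-avoiding point sets\<close>

lemma less_of_div_less: "(a::nat) div K < b div K \<Longrightarrow> a < b"
  by (metis div_le_mono not_less)

lemma div_eq_imp_bounds: "0 < (K::nat) \<Longrightarrow> x div K = y \<Longrightarrow> y * K \<le> x \<and> x < y * K + K"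
  by (metis add.commute div_mult_mod_eq le_add2 mod_less_divisor nat_add_left_cancel_less)

lemma sorted_list_of_set_nth_less:
  assumes "finite A" "i < j" "j < card A"
  shows "sorted_list_of_set A ! i < sorted_list_of_set A ! j"
  using sorted_wrt_nth_less[OF strict_sorted_list_of_set[of A]] assms by simp

lemma sorted_list_of_set_nth_mem:
  assumes "finite A" "i < card A"
  shows "sorted_list_of_set A ! i \<in> A"
  using assms by (metis length_sorted_list_of_set nth_mem set_sorted_list_of_set)

lemma card_le_mult_of_cover:
  assumes "finite I" "A \<subseteq> (\<Union>i\<in>I. F i)"
    and "\<And>i. i \<in> I \<Longrightarrow> finite (F i)" "\<And>i. i \<in> I \<Longrightarrow> card (F i) \<le> m"
  shows "card A \<le> card I * m"
proof -
  have "card A \<le> card (\<Union>i\<in>I. F i)"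
    using assms by (intro card_mono) auto
  also have "\<dots> \<le> (\<Sum>i\<in>I. card (F i))"
    using assms(1) by (rule card_UN_le)
  also have "\<dots> \<le> card I * m"
    using assms(4) sum_bounded_above[of I "\<lambda>i. card (F i)" m] by simp
  finally show ?thesis .
qed

lemma card_le_card_fst_times_card_snd:
  assumes "finite X"
  shows "card X \<le> card (fst ` X) * card (snd ` X)"
  using card_mono[OF _ subset_fst_snd[of X]] assms by (simp add: card_cartesian_product)

definition grid :: "nat \<Rightarrow> (nat \<times> nat) set" where
  "grid n = {..<n} \<times> {..<n}"

text \<open>
  A set of lattice points stands for a 0-1 matrix. The pattern has points t < k with column ranks
  \<rho> t and row ranks \<sigma> t; only the order relations they prescribe are required, which for
  permutation patterns amounts to ordinary containment.
\<close>

definition contains_pattern :: "(nat \<times> nat) set \<Rightarrow> nat \<Rightarrow> (nat \<Rightarrow> nat) \<Rightarrow> (nat \<Rightarrow> nat) \<Rightarrow> bool" where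
  "contains_pattern S k \<rho> \<sigma> \<longleftrightarrow> (\<exists>f. (\<forall>t<k. f t \<in> S) \<and>
     (\<forall>i<k. \<forall>j<k. \<rho> i < \<rho> j \<longrightarrow> fst (f i) < fst (f j)) \<and>
     (\<forall>i<k. \<forall>j<k. \<sigma> i < \<sigma> j \<longrightarrow> snd (f i) < snd (f j)))"

definition block :: "nat \<Rightarrow> nat \<times> nat \<Rightarrow> nat \<times> nat" where
  "block K z = (fst z div K, snd z div K)"

definition block_points :: "nat \<Rightarrow> (nat \<times> nat) set \<Rightarrow> nat \<times> nat \<Rightarrow> (nat \<times> nat) set" where
  "block_points K S b = {z \<in> S. block K z = b}"

lemma finite_grid [simp]: "finite (grid n)"
  by (simp add: grid_def)

lemma contains_pattern_swap_imp:
  assumes "contains_pattern S k \<rho> \<sigma>"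
  shows "contains_pattern (prod.swap ` S) k \<sigma> \<rho>"
proof -
  obtain f where "\<forall>t<k. f t \<in> S"
    "\<forall>i<k. \<forall>j<k. \<rho> i < \<rho> j \<longrightarrow> fst (f i) < fst (f j)"
    "\<forall>i<k. \<forall>j<k. \<sigma> i < \<sigma> j \<longrightarrow> snd (f i) < snd (f j)"
    using assms unfolding contains_pattern_def by blast
  then show ?thesis
    unfolding contains_pattern_def by (intro exI[of _ "\<lambda>t. prod.swap (f t)"]) auto
qed

lemma contains_pattern_swap:
  "contains_pattern (prod.swap ` S) k \<sigma> \<rho> \<longleftrightarrow> contains_pattern S k \<rho> \<sigma>"
  using contains_pattern_swap_imp[of "prod.swap ` S" k \<sigma> \<rho>] contains_pattern_swap_imp[of S k \<rho> \<sigma>]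
  by (auto simp: image_image)

lemma contains_pattern_block_image:
  assumes "contains_pattern (block K ` S) k \<rho> \<sigma>"
  shows "contains_pattern S k \<rho> \<sigma>"
proof -
  obtain f where f: "\<forall>t<k. f t \<in> block K ` S"
    "\<forall>i<k. \<forall>j<k. \<rho> i < \<rho> j \<longrightarrow> fst (f i) < fst (f j)"
    "\<forall>i<k. \<forall>j<k. \<sigma> i < \<sigma> j \<longrightarrow> snd (f i) < snd (f j)"
    using assms unfolding contains_pattern_def by blast
  have "\<forall>t\<in>{..<k}. \<exists>z\<in>S. f t = block K z"
    using f(1) by blast
  then obtain g where g: "\<forall>t\<in>{..<k}. g t \<in> S \<and> f t = block K (g t)"
    by metis
  show ?thesis
    unfolding contains_pattern_def
    using f(2,3) g by (intro exI[of _ g]) (simp add: block_def, meson less_of_div_less lessThan_iff)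
qed

lemma contains_pattern_of_tall_blocks_in_row:
  assumes "finite F" "k \<le> card F" "\<And>b. b \<in> F \<Longrightarrow> snd b = y"
    and "finite A" "card A = k" "\<And>b. b \<in> F \<Longrightarrow> A \<subseteq> snd ` block_points K S b"
    and "\<forall>t<k. \<rho> t < k" "\<forall>t<k. \<sigma> t < k"
  shows "contains_pattern S k \<rho> \<sigma>"
proof -
  obtain F' where F': "F' \<subseteq> F" "card F' = k" "finite F'"
    using assms(2) by (rule obtain_subset_with_card_n)
  have "inj_on fst F'"
    using F'(1) assms(3) by (intro inj_onI) (metis prod.collapse subsetD)
  then have card_cols: "card (fst ` F') = k"
    using F'(2) card_image by fastforce
  define cols where "cols = sorted_list_of_set (fst ` F')"
  define rows where "rows = sorted_list_of_set A"
  have "\<exists>z\<in>S. block K z = (cols ! \<rho> t, y) \<and> snd z = rows ! \<sigma> t" if "t < k" for t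
  proof -
    have "cols ! \<rho> t \<in> fst ` F'"
      unfolding cols_def using card_cols assms(7) F'(3) that by (intro sorted_list_of_set_nth_mem) auto
    then obtain b where b: "b \<in> F'" "b = (cols ! \<rho> t, y)"
      using F'(1) assms(3) by (metis imageE prod.collapse subsetD)
    have "rows ! \<sigma> t \<in> A"
      unfolding rows_def using assms(4,5,8) that by (intro sorted_list_of_set_nth_mem) auto
    then have "rows ! \<sigma> t \<in> snd ` block_points K S b"
      using assms(6) b(1) F'(1) by blast
    then show ?thesis
      using b(2) unfolding block_points_def by auto
  qed
  then obtain f where f: "\<forall>t\<in>{..<k}. f t \<in> S \<and> block K (f t) = (cols ! \<rho> t, y) \<and> snd (f t) = rows ! \<sigma> t"
    by (metis lessThan_iff)
  have cols_less: "cols ! \<rho> i < cols ! \<rho> j" if "i < k" "j < k" "\<rho> i < \<rho> j" for i j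
    unfolding cols_def using card_cols assms(7) F'(3) that by (intro sorted_list_of_set_nth_less) auto
  have rows_less: "rows ! \<sigma> i < rows ! \<sigma> j" if "i < k" "j < k" "\<sigma> i < \<sigma> j" for i j
    unfolding rows_def using assms(4,5,8) that by (intro sorted_list_of_set_nth_less) auto
  show ?thesis
    unfolding contains_pattern_def
  proof (intro exI[of _ f] conjI allI impI)
    fix i j assume ij: "i < k" "j < k" "\<rho> i < \<rho> j"
    then have "fst (f i) div K < fst (f j) div K"
      using f cols_less[OF ij] by (simp add: block_def)
    then show "fst (f i) < fst (f j)"
      by (rule less_of_div_less)
  qed (use f rows_less in auto)
qed

text \<open>
  A block is tall if its points occupy at least k rows, wide if they occupy at least k columns.
  By pigeonhole on k-sets of rows: at most k - 1 tall blocks of one block row can share a chosen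
  k-set of rows, since k such blocks contain every k-point pattern.
\<close>

lemma card_tall_blocks_in_row_le:
  assumes avoid: "\<not> contains_pattern S k \<rho> \<sigma>"
    and ranks: "\<forall>t<k. \<rho> t < k" "\<forall>t<k. \<sigma> t < k" and "0 < K"
  shows "card {b \<in> grid M. k \<le> card (snd ` block_points K S b) \<and> snd b = y} \<le> (K choose k) * (k - 1)"
proof -
  define T where "T = {b \<in> grid M. k \<le> card (snd ` block_points K S b) \<and> snd b = y}"
  define I where "I = {y * K..<y * K + K}"
  define Subs where "Subs = {A. A \<subseteq> I \<and> card A = k}"
  have "finite T"
    unfolding T_def by (rule finite_subset[of _ "grid M"]) auto
  have rows_in_I: "snd ` block_points K S b \<subseteq> I" if "b \<in> T" for b
  proof
    fix x assume "x \<in> snd ` block_points K S b"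
    then have "x div K = y"
      using that by (auto simp: T_def block_points_def block_def)
    from div_eq_imp_bounds[OF \<open>0 < K\<close> this] show "x \<in> I"
      by (simp add: I_def)
  qed
  have "\<exists>A. A \<subseteq> snd ` block_points K S b \<and> card A = k" if "b \<in> T" for b
    using that obtain_subset_with_card_n[of k "snd ` block_points K S b"] unfolding T_def by blast
  then obtain rows where rows: "\<And>b. b \<in> T \<Longrightarrow> rows b \<subseteq> snd ` block_points K S b \<and> card (rows b) = k"
    by metis
  have "rows b \<in> Subs" if "b \<in> T" for b
    using rows[OF that] rows_in_I[OF that] by (auto simp: Subs_def)
  then have "T \<subseteq> (\<Union>A\<in>Subs. {b \<in> T. rows b = A})"
    by blast
  moreover have "card {b \<in> T. rows b = A} \<le> k - 1" if "A \<in> Subs" for A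
  proof (rule ccontr)
    assume "\<not> ?thesis"
    then have "k \<le> card {b \<in> T. rows b = A}"
      by simp
    moreover have "finite A" "card A = k"
      using that finite_subset[of A I] by (auto simp: Subs_def I_def)
    ultimately have "contains_pattern S k \<rho> \<sigma>"
      using \<open>finite T\<close> rows ranks
      by (intro contains_pattern_of_tall_blocks_in_row[of "{b \<in> T. rows b = A}" k y A]) (auto simp: T_def)
    with avoid show False ..
  qed
  moreover have "finite Subs"
    by (simp add: Subs_def I_def)
  ultimately have "card T \<le> card Subs * (k - 1)"
    using \<open>finite T\<close>
    by (intro card_le_mult_of_cover[where F = "\<lambda>A. {b \<in> T. rows b = A}"]) auto
  moreover have "card Subs = K choose k"
    by (simp add: Subs_def I_def n_subsets)
  ultimately show ?thesis
    by (simp add: T_def)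
qed

lemma card_tall_blocks_le:
  assumes "\<not> contains_pattern S k \<rho> \<sigma>" "\<forall>t<k. \<rho> t < k" "\<forall>t<k. \<sigma> t < k" "0 < K"
  shows "card {b \<in> grid M. k \<le> card (snd ` block_points K S b)} \<le> M * ((K choose k) * (k - 1))"
proof -
  let ?row = "\<lambda>y. {b \<in> grid M. k \<le> card (snd ` block_points K S b) \<and> snd b = y}"
  have "{b \<in> grid M. k \<le> card (snd ` block_points K S b)} \<subseteq> (\<Union>y\<in>{..<M}. ?row y)"
    by (auto simp: grid_def)
  then have "card {b \<in> grid M. k \<le> card (snd ` block_points K S b)} \<le> card {..<M} * ((K choose k) * (k - 1))"
    using card_tall_blocks_in_row_le[OF assms] by (intro card_le_mult_of_cover[where F = ?row]) auto
  then show ?thesis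
    by simp
qed

lemma block_points_swap:
  "block_points K (prod.swap ` S) (prod.swap b) = prod.swap ` block_points K S b"
  by (cases b) (auto simp: block_points_def block_def image_iff)

lemma card_wide_blocks_le:
  assumes "\<not> contains_pattern S k \<rho> \<sigma>" "\<forall>t<k. \<rho> t < k" "\<forall>t<k. \<sigma> t < k" "0 < K"
  shows "card {b \<in> grid M. k \<le> card (fst ` block_points K S b)} \<le> M * ((K choose k) * (k - 1))"
proof -
  let ?T = "{b \<in> grid M. k \<le> card (snd ` block_points K (prod.swap ` S) b)}"
  have "{b \<in> grid M. k \<le> card (fst ` block_points K S b)} = prod.swap ` ?T"
    by (force simp: grid_def image_iff block_points_swap[of K S "prod.swap _", simplified] image_image)
  then have "card {b \<in> grid M. k \<le> card (fst ` block_points K S b)} \<le> card ?T"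
    by (simp add: card_image)
  also have "\<dots> \<le> M * ((K choose k) * (k - 1))"
    using assms contains_pattern_swap[of S k \<sigma> \<rho>]
    by (intro card_tall_blocks_le[of "prod.swap ` S" k \<sigma> \<rho>]) auto
  finally show ?thesis .
qed

lemma card_block_points_le_square:
  assumes "0 < K"
  shows "card (block_points K S b) \<le> K * K"
proof -
  have "block_points K S b \<subseteq> {fst b * K..<fst b * K + K} \<times> {snd b * K..<snd b * K + K}"
  proof
    fix z assume "z \<in> block_points K S b"
    then have "fst z div K = fst b" "snd z div K = snd b"
      by (auto simp: block_points_def block_def)
    from div_eq_imp_bounds[OF assms this(1)] div_eq_imp_bounds[OF assms this(2)]
    show "z \<in> {fst b * K..<fst b * K + K} \<times> {snd b * K..<snd b * K + K}"
      by (simp add: mem_Times_iff)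
  qed
  then have "card (block_points K S b) \<le> card ({fst b * K..<fst b * K + K} \<times> {snd b * K..<snd b * K + K})"
    by (intro card_mono) auto
  then show ?thesis
    by (simp add: card_cartesian_product)
qed

lemma card_block_points_le_narrow:
  assumes "finite S" "card (fst ` block_points K S b) < k" "card (snd ` block_points K S b) < k"
  shows "card (block_points K S b) \<le> (k - 1) * (k - 1)"
proof -
  have "card (block_points K S b) \<le> card (fst ` block_points K S b) * card (snd ` block_points K S b)"
    using assms(1) by (intro card_le_card_fst_times_card_snd) (simp add: block_points_def)
  also have "\<dots> \<le> (k - 1) * (k - 1)"
    using assms(2,3) by (intro mult_le_mono) auto
  finally show ?thesis .
qed

lemma block_image_subset_grid: "0 < K \<Longrightarrow> S \<subseteq> grid (K * M) \<Longrightarrow> block K ` S \<subseteq> grid M"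
  by (auto simp: grid_def block_def less_mult_imp_div_less mult.commute)

lemma card_avoiding_le_contraction:
  assumes avoid: "\<not> contains_pattern S k \<rho> \<sigma>"
    and ranks: "\<forall>t<k. \<rho> t < k" "\<forall>t<k. \<sigma> t < k"
    and S: "S \<subseteq> grid (K * M)" and "0 < K"
  shows "card S \<le> (k - 1) * (k - 1) * card (block K ` S) + 2 * (K * K) * (M * ((K choose k) * (k - 1)))"
proof -
  define D where "D = M * ((K choose k) * (k - 1))"
  define B where "B = block K ` S"
  define tall where "tall = {b \<in> grid M. k \<le> card (snd ` block_points K S b)}"
  define wide where "wide = {b \<in> grid M. k \<le> card (fst ` block_points K S b)}"
  have "finite S"
    using S by (rule finite_subset) simp
  have B: "B \<subseteq> grid M"
    unfolding B_def by (rule block_image_subset_grid[OF \<open>0 < K\<close> S])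
  then have "finite B"
    by (rule finite_subset) simp
  have "card (B \<inter> tall) \<le> card tall" "card (B \<inter> wide) \<le> card wide"
    by (rule card_mono; simp add: tall_def wide_def)+
  then have card_tall: "card (B \<inter> tall) \<le> D" and card_wide: "card (B \<inter> wide) \<le> D"
    using card_tall_blocks_le[OF avoid ranks \<open>0 < K\<close>, of M] card_wide_blocks_le[OF avoid ranks \<open>0 < K\<close>, of M]
    unfolding D_def tall_def wide_def by linarith+
  have per_block: "card (block_points K S b)
      \<le> (k - 1) * (k - 1) + (if b \<in> tall then K * K else 0) + (if b \<in> wide then K * K else 0)"
    if "b \<in> B" for b
  proof (cases "b \<in> tall \<or> b \<in> wide")
    case True
    then show ?thesis
      using card_block_points_le_square[OF \<open>0 < K\<close>, of S b] by auto
  next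
    case False
    then have "card (block_points K S b) \<le> (k - 1) * (k - 1)"
      using that B \<open>finite S\<close> by (intro card_block_points_le_narrow) (auto simp: tall_def wide_def)
    then show ?thesis
      using False by simp
  qed
  have "S = (\<Union>b\<in>B. block_points K S b)"
    by (auto simp: block_points_def B_def)
  then have "card S \<le> (\<Sum>b\<in>B. card (block_points K S b))"
    using card_UN_le[OF \<open>finite B\<close>] by metis
  also have "\<dots> \<le> (\<Sum>b\<in>B. (k - 1) * (k - 1) + (if b \<in> tall then K * K else 0) + (if b \<in> wide then K * K else 0))"
    using per_block by (intro sum_mono) auto
  also have "\<dots> = (k - 1) * (k - 1) * card B + K * K * card (B \<inter> tall) + K * K * card (B \<inter> wide)"
    using \<open>finite B\<close> by (simp add: sum.distrib sum.If_cases Int_commute)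
  also have "\<dots> \<le> (k - 1) * (k - 1) * card B + K * K * D + K * K * D"
    using card_tall card_wide by (intro add_mono mult_le_mono2) auto
  finally show ?thesis
    by (simp add: B_def D_def)
qed

text \<open>
  With K = k^2, this c satisfies (k - 1)^2 c + 2 K^2 (K choose k) (k - 1) \<le> c K, which makes the
  contraction estimate close up under induction on the grid size K^j.
\<close>

definition mt_const :: "nat \<Rightarrow> nat" where
  "mt_const k = 2 * ((k * k) * (k * k)) * ((k * k choose k) * (k - 1)) + 1"

lemma card_avoiding_le_linear:
  assumes ranks: "\<forall>t<k. \<rho> t < k" "\<forall>t<k. \<sigma> t < k" and "1 \<le> k"
  shows "S \<subseteq> grid ((k * k) ^ j) \<Longrightarrow> \<not> contains_pattern S k \<rho> \<sigma> \<Longrightarrow> card S \<le> mt_const k * (k * k) ^ j"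
proof (induction j arbitrary: S)
  case 0
  then have "S \<subseteq> {(0, 0)}"
    by (auto simp: grid_def)
  then show ?case
    using card_mono[of "{(0::nat, 0::nat)}" S] by (simp add: mt_const_def)
next
  case (Suc j)
  define K where "K = k * k"
  define c where "c = mt_const k"
  define E where "E = 2 * (K * K) * ((K choose k) * (k - 1))"
  have "0 < K"
    using \<open>1 \<le> k\<close> by (simp add: K_def)
  have S: "S \<subseteq> grid (K * K ^ j)"
    using Suc.prems(1) by (simp add: K_def)
  have IH: "card (block K ` S) \<le> c * K ^ j"
    using Suc.IH Suc.prems(2) contains_pattern_block_image block_image_subset_grid[OF \<open>0 < K\<close> S]
    unfolding K_def c_def by blast
  have const: "(k - 1) * (k - 1) * c + E \<le> c * K"
  proof -
    obtain l where "k = Suc l"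
      using \<open>1 \<le> k\<close> by (cases k) auto
    then show ?thesis
      by (simp add: c_def mt_const_def E_def K_def algebra_simps)
  qed
  have "card S \<le> (k - 1) * (k - 1) * card (block K ` S) + E * K ^ j"
    using card_avoiding_le_contraction[OF Suc.prems(2) ranks S \<open>0 < K\<close>]
    by (simp add: E_def algebra_simps)
  also have "\<dots> \<le> (k - 1) * (k - 1) * (c * K ^ j) + E * K ^ j"
    using IH by (intro add_mono mult_le_mono2) auto
  also have "\<dots> = ((k - 1) * (k - 1) * c + E) * K ^ j"
    by (simp add: distrib_right mult.assoc)
  also have "\<dots> \<le> c * K ^ Suc j"
    using const by simp
  finally show ?case
    by (simp add: K_def c_def)
qed

section \<open>Counting pattern-avoiding point sets\<close>

definition avoiders :: "nat \<Rightarrow> nat \<Rightarrow> (nat \<Rightarrow> nat) \<Rightarrow> (nat \<Rightarrow> nat) \<Rightarrow> (nat \<times> nat) set set" where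
  "avoiders n k \<rho> \<sigma> = {S. S \<subseteq> grid n \<and> \<not> contains_pattern S k \<rho> \<sigma>}"

lemma finite_avoiders [simp]: "finite (avoiders n k \<rho> \<sigma>)"
  by (rule finite_subset[of _ "Pow (grid n)"]) (auto simp: avoiders_def)

lemma card_avoiders_mono: "n \<le> N \<Longrightarrow> card (avoiders n k \<rho> \<sigma>) \<le> card (avoiders N k \<rho> \<sigma>)"
  by (intro card_mono finite_avoiders) (auto simp: avoiders_def grid_def)

definition block_content :: "nat \<Rightarrow> (nat \<times> nat) set \<Rightarrow> nat \<times> nat \<Rightarrow> (nat \<times> nat) set" where
  "block_content K S b = {z \<in> grid K. (fst b * K + fst z, snd b * K + snd z) \<in> S}"

lemma inj_block_encoding:
  assumes "0 < K"
  shows "inj (\<lambda>S. (block K ` S, restrict (block_content K S) (block K ` S)))"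
proof (rule injI)
  fix S S'
  assume "(block K ` S, restrict (block_content K S) (block K ` S))
    = (block K ` S', restrict (block_content K S') (block K ` S'))"
  then have blocks: "block K ` S = block K ` S'"
    and "restrict (block_content K S) (block K ` S) = restrict (block_content K S') (block K ` S')"
    by (meson Pair_inject)+
  then have contents: "block_content K S b = block_content K S' b" if "b \<in> block K ` S" for b
    using that by (metis restrict_apply')
  have mem: "z \<in> T \<longleftrightarrow> (fst z mod K, snd z mod K) \<in> block_content K T (block K z)" for z T
    using assms by (simp add: block_content_def block_def grid_def)
  show "S = S'"
  proof (rule set_eqI)
    fix z
    show "z \<in> S \<longleftrightarrow> z \<in> S'"
    proof (cases "block K z \<in> block K ` S")
      case True
      then show ?thesis
        using mem[of z S] mem[of z S'] contents[OF True] by simp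
    next
      case False
      then show ?thesis
        using blocks by auto
    qed
  qed
qed

lemma card_avoiders_mult_le:
  assumes "0 < K" and small: "\<And>B. B \<in> avoiders M k \<rho> \<sigma> \<Longrightarrow> card B \<le> L"
  shows "card (avoiders (K * M) k \<rho> \<sigma>) \<le> card (avoiders M k \<rho> \<sigma>) * (2 ^ (K * K)) ^ L"
proof -
  define enc where "enc S = (block K ` S, restrict (block_content K S) (block K ` S))" for S
  define X where "X = (SIGMA B:avoiders M k \<rho> \<sigma>. B \<rightarrow>\<^sub>E Pow (grid K))"
  have fin: "finite B" if "B \<in> avoiders M k \<rho> \<sigma>" for B
    using that finite_subset[of B "grid M"] by (simp add: avoiders_def)
  have "enc ` avoiders (K * M) k \<rho> \<sigma> \<subseteq> X"
  proof
    fix E assume "E \<in> enc ` avoiders (K * M) k \<rho> \<sigma>"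
    then obtain S where S: "S \<subseteq> grid (K * M)" "\<not> contains_pattern S k \<rho> \<sigma>" "E = enc S"
      by (auto simp: avoiders_def)
    have "block K ` S \<in> avoiders M k \<rho> \<sigma>"
      using block_image_subset_grid[OF \<open>0 < K\<close> S(1)] S(2) contains_pattern_block_image[of K S k \<rho> \<sigma>]
      by (auto simp: avoiders_def)
    moreover have "restrict (block_content K S) (block K ` S) \<in> block K ` S \<rightarrow>\<^sub>E Pow (grid K)"
      by (auto simp: block_content_def)
    ultimately show "E \<in> X"
      by (simp add: X_def S(3) enc_def)
  qed
  moreover have "inj_on enc (avoiders (K * M) k \<rho> \<sigma>)"
    using inj_block_encoding[OF \<open>0 < K\<close>] unfolding enc_def by (rule inj_on_subset) simp
  moreover have "finite X"
    unfolding X_def using fin by (intro finite_SigmaI finite_avoiders finite_PiE) auto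
  ultimately have "card (avoiders (K * M) k \<rho> \<sigma>) \<le> card X"
    by (intro card_inj_on_le)
  also have "\<dots> = (\<Sum>B\<in>avoiders M k \<rho> \<sigma>. card (B \<rightarrow>\<^sub>E Pow (grid K)))"
    unfolding X_def using fin by (intro card_SigmaI finite_avoiders) (auto intro: finite_PiE)
  also have "\<dots> = (\<Sum>B\<in>avoiders M k \<rho> \<sigma>. (2 ^ (K * K)) ^ card B)"
    using fin by (intro sum.cong) (simp_all add: card_PiE card_Pow grid_def card_cartesian_product)
  also have "\<dots> \<le> (\<Sum>B\<in>avoiders M k \<rho> \<sigma>. (2 ^ (K * K)) ^ L)"
    using small by (intro sum_mono power_increasing) auto
  finally show ?thesis
    by simp
qed

lemma card_avoiders_pow_le:
  assumes ranks: "\<forall>t<k. \<rho> t < k" "\<forall>t<k. \<sigma> t < k" and "2 \<le> k"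
  shows "card (avoiders ((k * k) ^ j) k \<rho> \<sigma>) \<le> (2 ^ ((k * k) * (k * k))) ^ (mt_const k * (k * k) ^ j)"
proof (induction j)
  case 0
  have "card (avoiders 1 k \<rho> \<sigma>) \<le> card (Pow (grid 1))"
    by (intro card_mono) (auto simp: avoiders_def)
  also have "\<dots> = 2 ^ 1"
    by (simp add: grid_def card_Pow)
  also have "\<dots> \<le> 2 ^ ((k * k) * (k * k))"
    using \<open>2 \<le> k\<close> by (intro power_increasing) simp_all
  also have "\<dots> \<le> (2 ^ ((k * k) * (k * k))) ^ mt_const k"
    by (rule self_le_power) (simp_all add: mt_const_def)
  finally show ?case
    by simp
next
  case (Suc j)
  define K where "K = k * k"
  define X :: nat where "X = 2 ^ (K * K)"
  have "2 \<le> K"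
    using \<open>2 \<le> k\<close> mult_le_mono[of 1 k 2 k] by (simp add: K_def)
  have "card (avoiders (K * K ^ j) k \<rho> \<sigma>) \<le> card (avoiders (K ^ j) k \<rho> \<sigma>) * X ^ (mt_const k * K ^ j)"
    unfolding X_def
  proof (rule card_avoiders_mult_le)
    show "0 < K"
      using \<open>2 \<le> K\<close> by simp
    fix B assume "B \<in> avoiders (K ^ j) k \<rho> \<sigma>"
    then show "card B \<le> mt_const k * K ^ j"
      using card_avoiding_le_linear[OF ranks] \<open>2 \<le> k\<close> by (auto simp: avoiders_def K_def)
  qed
  also have "\<dots> \<le> X ^ (mt_const k * K ^ j) * X ^ (mt_const k * K ^ j)"
    using Suc.IH by (simp add: K_def X_def)
  also have "\<dots> = X ^ (2 * (mt_const k * K ^ j))"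
    by (simp add: power_add[symmetric] mult_2)
  also have "\<dots> \<le> X ^ (mt_const k * K ^ Suc j)"
    using \<open>2 \<le> K\<close> by (intro power_increasing) (auto simp: X_def)
  finally show ?case
    by (simp add: K_def X_def)
qed

lemma exists_pow_between:
  assumes "2 \<le> (K::nat)" "1 \<le> n"
  obtains j where "n \<le> K ^ j" "K ^ j \<le> K * n"
proof -
  have "\<exists>j. n \<le> K ^ j"
    using less_exp[of n] power_mono[of 2 K n] assms(1) by (metis le_trans less_imp_le zero_le_numeral)
  define j where "j = (LEAST j. n \<le> K ^ j)"
  have j: "n \<le> K ^ j"
    unfolding j_def using \<open>\<exists>j. n \<le> K ^ j\<close> by (rule LeastI_ex)
  have "K ^ j \<le> K * n"
  proof (cases j)
    case (Suc i)
    then have "i < j"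
      by simp
    then have "\<not> n \<le> K ^ i"
      unfolding j_def by (rule not_less_Least)
    then show ?thesis
      using Suc by simp
  qed (use assms in simp)
  with j show thesis
    by (rule that)
qed

lemma card_avoiders_exp_le:
  assumes ranks: "\<forall>t<k. \<rho> t < k" "\<forall>t<k. \<sigma> t < k" and "2 \<le> k"
  obtains Z :: nat where "\<And>n. card (avoiders n k \<rho> \<sigma>) \<le> Z ^ n"
proof
  define K where "K = k * k"
  define X :: nat where "X = 2 ^ (K * K)"
  have "2 \<le> K"
    using \<open>2 \<le> k\<close> mult_le_mono[of 1 k 2 k] by (simp add: K_def)
  fix n
  show "card (avoiders n k \<rho> \<sigma>) \<le> (X ^ (mt_const k * K)) ^ n"
  proof (cases "n = 0")
    case True
    have "avoiders 0 k \<rho> \<sigma> \<subseteq> {{}}"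
      by (auto simp: avoiders_def grid_def)
    then have "card (avoiders 0 k \<rho> \<sigma>) \<le> card {{} :: (nat \<times> nat) set}"
      by (rule card_mono[rotated]) simp
    then show ?thesis
      using True by simp
  next
    case False
    then obtain j where j: "n \<le> K ^ j" "K ^ j \<le> K * n"
      using exists_pow_between[OF \<open>2 \<le> K\<close>] by (metis less_one not_le)
    have "card (avoiders n k \<rho> \<sigma>) \<le> card (avoiders (K ^ j) k \<rho> \<sigma>)"
      using j(1) by (rule card_avoiders_mono)
    also have "\<dots> \<le> X ^ (mt_const k * K ^ j)"
      using card_avoiders_pow_le[OF ranks \<open>2 \<le> k\<close>] by (simp add: K_def X_def)
    also have "\<dots> \<le> X ^ (mt_const k * (K * n))"
      using j(2) by (intro power_increasing) (auto simp: X_def)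
    finally show ?thesis
      by (simp add: power_mult mult.assoc)
  qed
qed

section \<open>Exponential bound for strongly avoiding permutations\<close>

lemma is_perm_nth: "is_perm n p \<Longrightarrow> i < n \<Longrightarrow> p ! i \<in> {1..n}"
  by (auto simp: is_perm_def dest: nth_mem)

definition perm_graph :: "nat list \<Rightarrow> (nat \<times> nat) set" where
  "perm_graph p = (\<lambda>i. (i, p ! i - 1)) ` {..<length p}"

lemma perm_graph_subset_grid: "is_perm n p \<Longrightarrow> perm_graph p \<subseteq> grid n"
  using is_perm_nth[of n p] by (fastforce simp: perm_graph_def grid_def is_perm_def)

lemma inj_on_perm_graph: "inj_on perm_graph {p. is_perm n p}"
proof (rule inj_onI)
  fix p p' assume p: "p \<in> {p. is_perm n p}" and p': "p' \<in> {p. is_perm n p}"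
    and eq: "perm_graph p = perm_graph p'"
  show "p = p'"
  proof (rule nth_equalityI)
    show "length p = length p'"
      using p p' by (simp add: is_perm_def)
    fix i assume "i < length p"
    then have "(i, p ! i - 1) \<in> perm_graph p'"
      using eq by (auto simp: perm_graph_def)
    then have "p ! i - 1 = p' ! i - 1"
      by (auto simp: perm_graph_def)
    moreover have "p ! i \<in> {1..n}" "p' ! i \<in> {1..n}"
      using is_perm_nth p p' \<open>i < length p\<close> by (auto simp: is_perm_def)
    ultimately show "p ! i = p' ! i"
      by auto
  qed
qed

lemma less_iff_of_less_imp_less:
  fixes g h :: "'a \<Rightarrow> 'b::linorder"
  assumes "inj_on h A" "\<And>r s. r \<in> A \<Longrightarrow> s \<in> A \<Longrightarrow> h r < h s \<Longrightarrow> g r < g s" "r \<in> A" "s \<in> A"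
  shows "g r < g s \<longleftrightarrow> h r < h s"
  using assms by (metis inj_on_eq_iff less_asym linorder_neqE)

lemma contains_of_contains_pattern_perm_graph:
  assumes p: "is_perm n p" and q: "is_perm k q"
    and "contains_pattern (perm_graph p) k id (\<lambda>t. q ! t - 1)"
  shows "contains p q"
proof -
  obtain f where f: "\<forall>t<k. f t \<in> perm_graph p"
    "\<forall>i<k. \<forall>j<k. i < j \<longrightarrow> fst (f i) < fst (f j)"
    "\<forall>i<k. \<forall>j<k. q ! i - 1 < q ! j - 1 \<longrightarrow> snd (f i) < snd (f j)"
    using assms(3) unfolding contains_pattern_def by auto
  have f_graph: "fst (f t) < n \<and> snd (f t) = p ! fst (f t) - 1" if "t < k" for t
    using f(1) that p by (auto simp: perm_graph_def is_perm_def)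
  have "p ! fst (f r) < p ! fst (f s)" if "r < k" "s < k" "q ! r < q ! s" for r s
  proof -
    have "q ! r - 1 < q ! s - 1"
      using that is_perm_nth[OF q \<open>r < k\<close>] by (simp add: diff_less_mono)
    then show ?thesis
      using f(3) f_graph that by fastforce
  qed
  moreover have "inj_on (nth q) {..<k}"
    using q by (simp add: is_perm_def inj_on_nth)
  ultimately have "p ! fst (f r) < p ! fst (f s) \<longleftrightarrow> q ! r < q ! s" if "r < k" "s < k" for r s
    using that by (intro less_iff_of_less_imp_less[of "nth q" "{..<k}"]) auto
  moreover have "fst (f t) < length p" if "t < k" for t
    using f_graph[OF that] p by (simp add: is_perm_def)
  ultimately show ?thesis
    unfolding contains_def using f(2) q
    by (intro exI[of _ "\<lambda>t. fst (f t)"]) (auto simp: is_perm_def)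
qed

lemma finite_perms: "finite {p. is_perm n p \<and> P p}"
  by (rule finite_subset[of _ "{xs. set xs \<subseteq> {1..n} \<and> length xs = n}"])
    (auto simp: is_perm_def intro: finite_lists_length_eq)

lemma Sav_le_pow:
  assumes q: "is_perm k q" and "2 \<le> k"
  obtains Z :: nat where "\<And>n. Sav n q \<le> Z ^ n"
proof -
  have "q ! t - 1 < k" if "t < k" for t
    using is_perm_nth[OF q that] by auto
  then have ranks: "\<forall>t<k. id t < k" "\<forall>t<k. q ! t - 1 < k"
    by auto
  obtain Z where Z: "\<And>n. card (avoiders n k id (\<lambda>t. q ! t - 1)) \<le> Z ^ n"
    using card_avoiders_exp_le[OF ranks \<open>2 \<le> k\<close>] by blast
  have "Sav n q \<le> Z ^ n" for n
  proof -
    have "Sav n q \<le> card {p. is_perm n p \<and> avoids p q}"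
      unfolding Sav_def by (intro card_mono finite_perms) (auto simp: strongly_avoids_def)
    also have "\<dots> = card (perm_graph ` {p. is_perm n p \<and> avoids p q})"
      by (intro card_image[symmetric] inj_on_subset[OF inj_on_perm_graph]) auto
    also have "\<dots> \<le> card (avoiders n k id (\<lambda>t. q ! t - 1))"
      using perm_graph_subset_grid contains_of_contains_pattern_perm_graph[OF _ q]
      by (intro card_mono finite_avoiders) (auto simp: avoiders_def avoids_def)
    finally show ?thesis
      using Z[of n] by simp
  qed
  then show thesis
    by (rule that)
qed

section \<open>Supermultiplicativity via direct sums\<close>

definition direct_sum :: "nat list \<Rightarrow> nat list \<Rightarrow> nat list" where
  "direct_sum p p' = p @ map (\<lambda>x. x + length p) p'"

lemma length_direct_sum [simp]: "length (direct_sum p p') = length p + length p'"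
  by (simp add: direct_sum_def)

lemma nth_direct_sum_left: "i < length p \<Longrightarrow> direct_sum p p' ! i = p ! i"
  by (simp add: direct_sum_def nth_append)

lemma nth_direct_sum_right:
  "length p \<le> i \<Longrightarrow> i < length p + length p' \<Longrightarrow> direct_sum p p' ! i = p' ! (i - length p) + length p"
  by (simp add: direct_sum_def nth_append)

lemma is_perm_direct_sum: "is_perm m p \<Longrightarrow> is_perm n p' \<Longrightarrow> is_perm (m + n) (direct_sum p p')"
  by (auto simp: is_perm_def direct_sum_def distinct_map inj_on_def)

lemma direct_sum_eq_iff: "length p = length r \<Longrightarrow> direct_sum p p' = direct_sum r r' \<longleftrightarrow> p = r \<and> p' = r'"
  by (auto simp: direct_sum_def inj_map_eq_map inj_on_def)

lemma length_perm_sq [simp]: "length (perm_sq p) = length p"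
  by (simp add: perm_sq_def del: upt_Suc)

lemma nth_perm_sq: "i < length p \<Longrightarrow> perm_sq p ! i = p ! (p ! i - 1)"
  by (simp add: perm_sq_def pval_def del: upt_Suc)

lemma set_perm_sq_subset:
  assumes p: "is_perm n p"
  shows "set (perm_sq p) \<subseteq> {1..n}"
proof
  fix x assume "x \<in> set (perm_sq p)"
  then obtain i where "i < n" "x = p ! (p ! i - 1)"
    using p by (auto simp: in_set_conv_nth nth_perm_sq is_perm_def)
  moreover have "p ! i - 1 < n"
    using is_perm_nth[OF p \<open>i < n\<close>] by auto
  ultimately show "x \<in> {1..n}"
    using is_perm_nth[OF p] by simp
qed

lemma perm_sq_direct_sum:
  assumes p: "is_perm m p" and p': "is_perm n p'"
  shows "perm_sq (direct_sum p p') = direct_sum (perm_sq p) (perm_sq p')"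
proof (rule nth_equalityI)
  have len: "length p = m" "length p' = n"
    using p p' by (auto simp: is_perm_def)
  show "length (perm_sq (direct_sum p p')) = length (direct_sum (perm_sq p) (perm_sq p'))"
    by simp
  fix i assume "i < length (perm_sq (direct_sum p p'))"
  then have "i < m + n"
    using len by simp
  then consider "i < m" | i' where "i' < n" "i = m + i'"
    by (metis add_less_imp_less_left le_Suc_ex not_le)
  then show "perm_sq (direct_sum p p') ! i = direct_sum (perm_sq p) (perm_sq p') ! i"
  proof cases
    case 1
    then have "p ! i - 1 < m"
      using is_perm_nth[OF p] by fastforce
    then show ?thesis
      using 1 len by (simp add: nth_perm_sq nth_direct_sum_left)
  next
    case 2
    then have "p' ! i' - 1 < n" "p' ! i' + m - 1 = m + (p' ! i' - 1)"
      using is_perm_nth[OF p'] by fastforce+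
    then show ?thesis
      using 2 len by (simp add: nth_perm_sq nth_direct_sum_right)
  qed
qed

lemma contains_direct_sum_indecomposable:
  assumes a: "set a \<subseteq> {1..length a}" and b: "set b \<subseteq> {1..length b}"
    and "indecomposable q" and "contains (direct_sum a b) q"
  shows "contains a q \<or> contains b q"
proof -
  define m where "m = length a"
  define L where "L = length q"
  obtain ix where ix_mono: "\<And>r s. r < s \<Longrightarrow> s < L \<Longrightarrow> ix r < ix s"
    and ix_len: "\<And>r. r < L \<Longrightarrow> ix r < m + length b"
    and ix_ord: "\<And>r s. r < L \<Longrightarrow> s < L \<Longrightarrow> direct_sum a b ! ix r < direct_sum a b ! ix s \<longleftrightarrow> q ! r < q ! s"
    using \<open>contains (direct_sum a b) q\<close> unfolding contains_def L_def m_def length_direct_sum by blast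
  \<comment> \<open>The occurrence is split at j: the points before j lie in a, the others in b.\<close>
  define j where "j = (LEAST s. s = L \<or> m \<le> ix s)"
  have "j \<le> L"
    unfolding j_def by (rule Least_le) simp
  have left: "ix r < m" if "r < j" for r
    using not_less_Least[OF that[unfolded j_def]] by simp
  have right: "m \<le> ix r" if "j \<le> r" "r < L" for r
  proof -
    have "j = L \<or> m \<le> ix j"
      unfolding j_def by (rule LeastI[of _ L]) simp
    then show ?thesis
      using that ix_mono[of j r] by (cases "j = r") auto
  qed
  consider "j = L" | "j = 0" | "0 < j" "j < L"
    using \<open>j \<le> L\<close> by linarith
  then show ?thesis
  proof cases
    case 1
    then have "contains a q"
      unfolding contains_def using left ix_mono ix_ord
      by (intro exI[of _ ix]) (auto simp: L_def m_def nth_direct_sum_left)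
    then show ?thesis ..
  next
    case 2
    then have in_b: "m \<le> ix r \<and> ix r < m + length b" if "r < L" for r
      using right[of r] ix_len[of r] that by auto
    have "direct_sum a b ! ix r = b ! (ix r - m) + m" if "r < L" for r
      using in_b[OF that] by (simp add: m_def nth_direct_sum_right)
    then have "b ! (ix r - m) < b ! (ix s - m) \<longleftrightarrow> q ! r < q ! s" if "r < L" "s < L" for r s
      using ix_ord[OF that] that by simp
    moreover have "ix r - m < ix s - m" if "r < s" "s < L" for r s
      using in_b[of r] ix_mono[OF that] that by (meson diff_less_mono less_trans)
    moreover have "ix r - m < length b" if "r < L" for r
      using in_b[OF that] by linarith
    ultimately have "contains b q"
      unfolding contains_def L_def by (intro exI[of _ "\<lambda>r. ix r - m"]) simp
    then show ?thesis ..
  next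
    case 3
    have "q ! r < q ! s" if "r < j" "j \<le> s" "s < L" for r s
    proof -
      have pos: "ix r < m" "m \<le> ix s" "ix s - m < length b"
        using left[of r] right[of s] ix_len[of s] that by auto
      then have "a ! ix r \<in> {1..m}" "b ! (ix s - m) \<in> {1..length b}"
        using a b unfolding m_def by (meson nth_mem subsetD)+
      then have "direct_sum a b ! ix r < direct_sum a b ! ix s"
        using pos by (simp add: m_def nth_direct_sum_left nth_direct_sum_right)
      then show ?thesis
        using ix_ord[of r s] that \<open>j \<le> L\<close> by simp
    qed
    then show ?thesis
      using \<open>indecomposable q\<close> 3 unfolding indecomposable_def L_def by blast
  qed
qed

lemma strongly_avoids_direct_sum:
  assumes "is_perm m p" "is_perm n p'" "indecomposable q"
    and "strongly_avoids p q" "strongly_avoids p' q"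
  shows "strongly_avoids (direct_sum p p') q"
proof -
  have "set p \<subseteq> {1..length p}" "set p' \<subseteq> {1..length p'}"
    "set (perm_sq p) \<subseteq> {1..length (perm_sq p)}" "set (perm_sq p') \<subseteq> {1..length (perm_sq p')}"
    using assms(1,2) set_perm_sq_subset[OF assms(1)] set_perm_sq_subset[OF assms(2)]
    by (auto simp: is_perm_def)
  then have "\<not> contains (direct_sum p p') q" "\<not> contains (direct_sum (perm_sq p) (perm_sq p')) q"
    using assms(3-5) contains_direct_sum_indecomposable[of p p' q]
      contains_direct_sum_indecomposable[of "perm_sq p" "perm_sq p'" q]
    by (auto simp: strongly_avoids_def avoids_def)
  then show ?thesis
    by (simp add: strongly_avoids_def avoids_def perm_sq_direct_sum[OF assms(1,2)])
qed

lemma Sav_supermult: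
  assumes "indecomposable q"
  shows "Sav m q * Sav n q \<le> Sav (m + n) q"
proof -
  define A where "A = {p. is_perm m p \<and> strongly_avoids p q}"
  define B where "B = {p. is_perm n p \<and> strongly_avoids p q}"
  have "inj_on (\<lambda>(p, p'). direct_sum p p') (A \<times> B)"
    by (auto simp: inj_on_def A_def is_perm_def direct_sum_eq_iff)
  moreover have "(\<lambda>(p, p'). direct_sum p p') ` (A \<times> B) \<subseteq> {p. is_perm (m + n) p \<and> strongly_avoids p q}"
    using is_perm_direct_sum strongly_avoids_direct_sum[OF _ _ assms] by (auto simp: A_def B_def)
  ultimately have "card (A \<times> B) \<le> card {p. is_perm (m + n) p \<and> strongly_avoids p q}"
    by (intro card_inj_on_le finite_perms)
  then show ?thesis
    by (simp add: Sav_def A_def B_def card_cartesian_product)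
qed

lemma not_contains_sorted:
  assumes "indecomposable q" "2 \<le> length q" "sorted_wrt (<) p"
  shows "\<not> contains p q"
proof
  assume "contains p q"
  then obtain ix where ix: "\<forall>r s. r < s \<and> s < length q \<longrightarrow> ix r < ix s"
    "\<forall>r<length q. ix r < length p"
    "\<forall>r<length q. \<forall>s<length q. p ! ix r < p ! ix s \<longleftrightarrow> q ! r < q ! s"
    unfolding contains_def by blast
  have "q ! 0 < q ! s" if "1 \<le> s" "s < length q" for s
  proof -
    have "p ! ix 0 < p ! ix s"
      using ix(1,2) that sorted_wrt_nth_less[OF assms(3)] by simp
    then show ?thesis
      using ix(3)[rule_format, of 0 s] that by (metis le_less_trans zero_le)
  qed
  then have "\<exists>j. 0 < j \<and> j < length q \<and> (\<forall>a<j. \<forall>b. j \<le> b \<and> b < length q \<longrightarrow> q ! a < q ! b)"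
    using assms(2) by (intro exI[of _ 1]) auto
  with assms(1) show False
    by (simp add: indecomposable_def)
qed

lemma Sav_pos:
  assumes "indecomposable q" "2 \<le> length q"
  shows "0 < Sav n q"
proof -
  define idn where "idn = [1..<n + 1]"
  have "is_perm n idn"
    by (simp add: idn_def is_perm_def atLeastLessThanSuc_atLeastAtMost del: upt_Suc)
  moreover have "perm_sq idn = idn"
    by (rule nth_equalityI) (simp_all add: idn_def nth_perm_sq del: upt_Suc)
  moreover have "\<not> contains idn q"
    using not_contains_sorted[OF assms] by (simp add: idn_def del: upt_Suc)
  ultimately have "idn \<in> {p. is_perm n p \<and> strongly_avoids p q}"
    by (simp add: strongly_avoids_def avoids_def)
  then have "{p. is_perm n p \<and> strongly_avoids p q} \<noteq> {}"
    by blast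
  then show ?thesis
    unfolding Sav_def by (simp add: card_gt_0_iff finite_perms)
qed

lemma Sav_eq_0:
  assumes "length q \<le> 1" "0 < n"
  shows "Sav n q = 0"
proof -
  have "contains p q" if "is_perm n p" for p
    unfolding contains_def
  proof (intro exI[of _ "\<lambda>_. 0"] conjI allI impI)
    fix r s assume "r < s \<and> s < length q"
    with assms(1) show "(0::nat) < 0"
      by linarith
  next
    show "0 < length p"
      using that assms(2) by (simp add: is_perm_def)
  next
    fix r s assume "r < length q" "s < length q"
    with assms(1) have "r = s"
      by linarith
    then show "p ! 0 < p ! 0 \<longleftrightarrow> q ! r < q ! s"
      by simp
  qed
  then have "{p. is_perm n p \<and> strongly_avoids p q} = {}"
    by (auto simp: strongly_avoids_def avoids_def)
  then show ?thesis
    unfolding Sav_def by (metis card.empty)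
qed

theorem proposition5p1:
  fixes q :: "nat list" and k :: nat
  assumes "is_perm k q" and "indecomposable q"
  shows "convergent (\<lambda>n. root n (real (Sav n q)))"
proof (cases "k \<le> 1")
  case True
  then have "length q \<le> 1"
    using assms(1) by (simp add: is_perm_def)
  then have "root n (real (Sav n q)) = 0" for n
    by (cases "n = 0") (simp_all add: Sav_eq_0)
  then have "(\<lambda>n. root n (real (Sav n q))) = (\<lambda>n. 0)"
    by simp
  then show ?thesis
    by (simp add: convergent_const)
next
  case False
  then have "2 \<le> k" "2 \<le> length q"
    using assms(1) by (auto simp: is_perm_def)
  obtain Z where "\<And>n. Sav n q \<le> Z ^ n"
    using Sav_le_pow[OF assms(1) \<open>2 \<le> k\<close>] by blast
  with Sav_pos[OF assms(2) \<open>2 \<le> length q\<close>] Sav_supermult[OF assms(2)] show ?thesis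
    by (rule convergent_root_supermultiplicative)
qed

end
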